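(* There exists a geodesic triangle in $\mathbf{Sol}$ with three distinct vertices in $\mathbf{Sol}$, not lying on a common geodesic, whose interior angle sum is exactly $\pi$.
   Context: $\mathbf{Sol}$ is $\mathbb{R}^3$ with coordinates $(x,y,z)$, with group law $(a,b,c)(x,y,z)=(x+ae^{-z},\,y+be^{z},\,z+c)$ and left-invariant Riemannian metric $ds^2=e^{2z}dx^2+e^{-2z}dy^2+dz^2$. A geodesic triangle consists of three points (vertices) and geodesic segments (sides) joining them pairwise; the interior angle at a vertex is the angle, measured with the Riemannian metric at that vertex, between the initial tangent vectors of the two sides issuing from that vertex. *)

theory Defs
  imports "HOL-Analysis.Analysis"
begin

text \<open>Points of Sol and tangent vectors are triples (x,y,z) of reals.
  Metric: ds^2 = e^(2z) dx^2 + e^(-2z) dy^2 + dz^2.\<close>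

type_synonym sol = "real \<times> real \<times> real"

definition sol_inner :: "sol \<Rightarrow> sol \<Rightarrow> sol \<Rightarrow> real" where
  "sol_inner p v w =
     exp (2 * snd (snd p)) * fst v * fst w
   + exp (- 2 * snd (snd p)) * fst (snd v) * fst (snd w)
   + snd (snd v) * snd (snd w)"

definition sol_norm :: "sol \<Rightarrow> sol \<Rightarrow> real" where
  "sol_norm p v = sqrt (sol_inner p v v)"

definition sol_angle :: "sol \<Rightarrow> sol \<Rightarrow> sol \<Rightarrow> real" where
  "sol_angle p v w = arccos (sol_inner p v w / (sol_norm p v * sol_norm p w))"

text \<open>Geodesic equation of the Levi-Civita connection of the Sol metric
  (Euler-Lagrange equations of the energy):
    x'' + 2 x' z' = 0,  y'' - 2 y' z' = 0,  z'' - e^(2z) x'^2 + e^(-2z) y'^2 = 0.\<close>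
definition sol_geodesic_eq :: "sol \<Rightarrow> sol \<Rightarrow> sol \<Rightarrow> bool" where
  "sol_geodesic_eq p v a \<longleftrightarrow>
     fst a + 2 * fst v * snd (snd v) = 0 \<and>
     fst (snd a) - 2 * fst (snd v) * snd (snd v) = 0 \<and>
     snd (snd a) - exp (2 * snd (snd p)) * (fst v)^2
                 + exp (- 2 * snd (snd p)) * (fst (snd v))^2 = 0"

definition sol_geodesic_on :: "real set \<Rightarrow> (real \<Rightarrow> sol) \<Rightarrow> bool" where
  "sol_geodesic_on I \<gamma> \<longleftrightarrow>
     (\<exists>\<gamma>' \<gamma>''. \<forall>t\<in>I.
        (\<gamma> has_vector_derivative \<gamma>' t) (at t within I) \<and>
        (\<gamma>' has_vector_derivative \<gamma>'' t) (at t within I) \<and>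
        sol_geodesic_eq (\<gamma> t) (\<gamma>' t) (\<gamma>'' t))"

definition sol_geodesic_segment :: "(real \<Rightarrow> sol) \<Rightarrow> sol \<Rightarrow> sol \<Rightarrow> bool" where
  "sol_geodesic_segment \<gamma> p q \<longleftrightarrow>
     sol_geodesic_on {0..1} \<gamma> \<and> \<gamma> 0 = p \<and> \<gamma> 1 = q"

definition init_tangent :: "(real \<Rightarrow> sol) \<Rightarrow> sol" where
  "init_tangent \<gamma> = vector_derivative \<gamma> (at 0 within {0..1})"

text \<open>Initial tangent at the endpoint gamma 1 of the reversed segment.\<close>
definition end_tangent :: "(real \<Rightarrow> sol) \<Rightarrow> sol" where
  "end_tangent \<gamma> = - vector_derivative \<gamma> (at 1 within {0..1})"

definition sol_on_common_geodesic :: "sol \<Rightarrow> sol \<Rightarrow> sol \<Rightarrow> bool" where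
  "sol_on_common_geodesic A B C \<longleftrightarrow>
     (\<exists>\<gamma>. sol_geodesic_on UNIV \<gamma> \<and> A \<in> range \<gamma> \<and> B \<in> range \<gamma> \<and> C \<in> range \<gamma>)"

end

theory Submission
  imports Defs
begin

text \<open>
  Take A = (0,0,0), B = (p,0,-ln 4), C = (0,p/16,-ln 4) with p > 0. The planes y = 0 and x = 0
  are totally geodesic hyperbolic planes (upper half-plane coordinates (x, e^-z) and (y, e^z)),
  so AB and CA can be taken to be hyperbolic semicircles; BC is a horizontal straight segment,
  a geodesic because e^{2z} p^2 = e^{-2z} (p/16)^2 at height z = -ln 4. The three angles depend
  continuously on p, and comparing cos A with cos (pi - B - C) shows that the angle sum is at
  most pi for p = 5 and at least pi for p = 15, so it equals pi for some p in between.
  The vertices are not on a common geodesic: e^{2z} x' is conserved along geodesics, so a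
  geodesic meeting the plane x = 0 twice (at A and C) stays in it, but B is not in that plane.
\<close>

section \<open>Geodesic segments in Sol\<close>

lemma has_vector_derivative_triple:
  assumes "(f has_real_derivative f') (at t within S)"
    and "(g has_real_derivative g') (at t within S)"
    and "(h has_real_derivative h') (at t within S)"
  shows "((\<lambda>t. (f t, g t, h t)) has_vector_derivative (f', g', h')) (at t within S)"
  using assms
  by (auto intro!: has_vector_derivative_Pair simp: has_real_derivative_iff_has_vector_derivative)

lemma vector_derivative_unit_interval:
  "((\<gamma> :: real \<Rightarrow> 'a::euclidean_space) has_vector_derivative v) (at t within {0..1}) \<Longrightarrow> t \<in> {0..1} \<Longrightarrow>
     vector_derivative \<gamma> (at t within {0..1}) = v"
  by (rule vector_derivative_within_closed_interval) auto

lemma sol_geodesic_segment_has_vector_derivative: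
  assumes "sol_geodesic_segment \<gamma> P Q" and "t \<in> {0..1}"
  shows "(\<gamma> has_vector_derivative vector_derivative \<gamma> (at t within {0..1})) (at t within {0..1})"
  using assms unfolding sol_geodesic_segment_def sol_geodesic_on_def
  by (metis vector_derivative_unit_interval)

text \<open>The isometry (x, y, z) \<mapsto> (y, x, -z); it maps the plane y = 0 onto the plane x = 0.\<close>

definition sol_swap :: "sol \<Rightarrow> sol" where
  "sol_swap v = (fst (snd v), fst v, - snd (snd v))"

lemma bounded_linear_sol_swap: "bounded_linear sol_swap"
  unfolding linear_conv_bounded_linear[symmetric]
  by (rule linearI) (auto simp: sol_swap_def)

lemma sol_geodesic_eq_swap:
  "sol_geodesic_eq (sol_swap p) (sol_swap v) (sol_swap a) \<longleftrightarrow> sol_geodesic_eq p v a"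
  by (auto simp: sol_geodesic_eq_def sol_swap_def)

lemma sol_geodesic_on_swap:
  assumes "sol_geodesic_on I \<gamma>"
  shows "sol_geodesic_on I (sol_swap \<circ> \<gamma>)"
proof -
  obtain \<gamma>' \<gamma>'' where g: "\<forall>t\<in>I. (\<gamma> has_vector_derivative \<gamma>' t) (at t within I) \<and>
      (\<gamma>' has_vector_derivative \<gamma>'' t) (at t within I) \<and> sol_geodesic_eq (\<gamma> t) (\<gamma>' t) (\<gamma>'' t)"
    using assms unfolding sol_geodesic_on_def by blast
  then have "\<forall>t\<in>I. ((\<lambda>t. sol_swap (\<gamma> t)) has_vector_derivative sol_swap (\<gamma>' t)) (at t within I) \<and>
      ((\<lambda>t. sol_swap (\<gamma>' t)) has_vector_derivative sol_swap (\<gamma>'' t)) (at t within I) \<and>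
      sol_geodesic_eq (sol_swap (\<gamma> t)) (sol_swap (\<gamma>' t)) (sol_swap (\<gamma>'' t))"
    by (simp add: bounded_linear.has_vector_derivative[OF bounded_linear_sol_swap] sol_geodesic_eq_swap)
  then show ?thesis
    unfolding sol_geodesic_on_def comp_def
    by (intro exI[of _ "\<lambda>t. sol_swap (\<gamma>' t)"] exI[of _ "\<lambda>t. sol_swap (\<gamma>'' t)"])
qed

lemma sol_geodesic_segment_swap:
  assumes "sol_geodesic_segment \<gamma> P Q"
  shows "sol_geodesic_segment (sol_swap \<circ> \<gamma>) (sol_swap P) (sol_swap Q)"
    and "init_tangent (sol_swap \<circ> \<gamma>) = sol_swap (init_tangent \<gamma>)"
    and "end_tangent (sol_swap \<circ> \<gamma>) = sol_swap (end_tangent \<gamma>)"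
proof -
  have deriv: "(sol_swap \<circ> \<gamma> has_vector_derivative sol_swap (vector_derivative \<gamma> (at t within {0..1})))
      (at t within {0..1})" if "t \<in> {0..1}" for t
    unfolding comp_def
    by (rule bounded_linear.has_vector_derivative[OF bounded_linear_sol_swap
          sol_geodesic_segment_has_vector_derivative[OF assms that]])
  show "sol_geodesic_segment (sol_swap \<circ> \<gamma>) (sol_swap P) (sol_swap Q)"
    using assms sol_geodesic_on_swap by (auto simp: sol_geodesic_segment_def)
  show "init_tangent (sol_swap \<circ> \<gamma>) = sol_swap (init_tangent \<gamma>)"
    unfolding init_tangent_def using deriv[of 0] by (simp add: vector_derivative_unit_interval)
  show "end_tangent (sol_swap \<circ> \<gamma>) = sol_swap (end_tangent \<gamma>)"
    unfolding end_tangent_def using deriv[of 1]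
    by (simp add: vector_derivative_unit_interval sol_swap_def)
qed

lemma sol_geodesic_eq_uminus_velocity:
  "sol_geodesic_eq p (- v) a \<longleftrightarrow> sol_geodesic_eq p v a"
  by (simp add: sol_geodesic_eq_def)

lemma sol_geodesic_segment_reverse:
  assumes "sol_geodesic_segment \<gamma> P Q"
  shows "sol_geodesic_segment (\<lambda>t. \<gamma> (1 - t)) Q P"
    and "init_tangent (\<lambda>t. \<gamma> (1 - t)) = end_tangent \<gamma>"
    and "end_tangent (\<lambda>t. \<gamma> (1 - t)) = init_tangent \<gamma>"
proof -
  have flip: "(\<lambda>t. 1 - t) ` {0..1} = {0..1::real}"
    by (auto simp: image_iff intro!: bexI[of _ "1 - _"])
  have chain: "((\<lambda>t. f (1 - t)) has_vector_derivative - f') (at t within {0..1})"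
    if "(f has_vector_derivative f') (at (1 - t) within {0..1})" for f :: "real \<Rightarrow> sol" and f' t
  proof -
    have "((\<lambda>t. 1 - t) has_vector_derivative -1) (at t within {0..1::real})"
      by (auto intro!: derivative_eq_intros simp: has_real_derivative_iff_has_vector_derivative[symmetric])
    from vector_diff_chain_within[OF this, of f f'] that flip show ?thesis
      by (simp add: comp_def)
  qed
  obtain \<gamma>' \<gamma>'' where g: "\<forall>t\<in>{0..1}. (\<gamma> has_vector_derivative \<gamma>' t) (at t within {0..1}) \<and>
      (\<gamma>' has_vector_derivative \<gamma>'' t) (at t within {0..1}) \<and> sol_geodesic_eq (\<gamma> t) (\<gamma>' t) (\<gamma>'' t)"
    and ends: "\<gamma> 0 = P" "\<gamma> 1 = Q"
    using assms unfolding sol_geodesic_segment_def sol_geodesic_on_def by blast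
  have rev_deriv: "((\<lambda>t. \<gamma> (1 - t)) has_vector_derivative - \<gamma>' (1 - t)) (at t within {0..1})"
    if "t \<in> {0..1}" for t
    using g that by (intro chain) auto
  have "\<forall>t\<in>{0..1}. ((\<lambda>t. \<gamma> (1 - t)) has_vector_derivative - \<gamma>' (1 - t)) (at t within {0..1}) \<and>
      ((\<lambda>t. - \<gamma>' (1 - t)) has_vector_derivative \<gamma>'' (1 - t)) (at t within {0..1}) \<and>
      sol_geodesic_eq (\<gamma> (1 - t)) (- \<gamma>' (1 - t)) (\<gamma>'' (1 - t))"
    using g rev_deriv chain[of "\<lambda>t. - \<gamma>' t" "- \<gamma>'' (1 - _)"]
    by (simp add: has_vector_derivative_minus sol_geodesic_eq_uminus_velocity)
  then have "sol_geodesic_on {0..1} (\<lambda>t. \<gamma> (1 - t))"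
    unfolding sol_geodesic_on_def
    by (intro exI[of _ "\<lambda>t. - \<gamma>' (1 - t)"] exI[of _ "\<lambda>t. \<gamma>'' (1 - t)"])
  then show "sol_geodesic_segment (\<lambda>t. \<gamma> (1 - t)) Q P"
    using ends by (simp add: sol_geodesic_segment_def)
  have tangent: "vector_derivative \<gamma> (at t within {0..1}) = \<gamma>' t" if "t \<in> {0..1}" for t
    using g that by (simp add: vector_derivative_unit_interval)
  then show "init_tangent (\<lambda>t. \<gamma> (1 - t)) = end_tangent \<gamma>"
    using rev_deriv[of 0] by (simp add: init_tangent_def end_tangent_def vector_derivative_unit_interval)
  show "end_tangent (\<lambda>t. \<gamma> (1 - t)) = init_tangent \<gamma>"
    using rev_deriv[of 1] tangent by (simp add: init_tangent_def end_tangent_def vector_derivative_unit_interval)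
qed

text \<open>
  In the coordinates (x, e^-z) the plane y = 0 is the hyperbolic upper half-plane; xz_arc traces
  the semicircle of radius R centred at (m, 0), and u0 + a s is hyperbolic arc length along it.
\<close>

definition xz_arc :: "real \<Rightarrow> real \<Rightarrow> real \<Rightarrow> real \<Rightarrow> real \<Rightarrow> sol" where
  "xz_arc m R u0 a s = (m + R * sinh (u0 + a * s) / cosh (u0 + a * s), 0, ln (cosh (u0 + a * s)) - ln R)"

definition xz_arc_velocity :: "real \<Rightarrow> real \<Rightarrow> real \<Rightarrow> real \<Rightarrow> sol" where
  "xz_arc_velocity R u0 a s = (R * a / (cosh (u0 + a * s))\<^sup>2, 0, a * sinh (u0 + a * s) / cosh (u0 + a * s))"

lemma has_vector_derivative_xz_arc:
  "(xz_arc m R u0 a has_vector_derivative xz_arc_velocity R u0 a s) (at s within S)"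
proof -
  have "cosh (u0 + a * s) \<noteq> 0" and "(cosh (u0 + a * s))\<^sup>2 = (sinh (u0 + a * s))\<^sup>2 + 1"
    by (simp_all add: cosh_square_eq)
  then show ?thesis
    unfolding xz_arc_def xz_arc_velocity_def
    by (intro has_vector_derivative_triple) (auto intro!: derivative_eq_intros simp: field_simps power2_eq_square)
qed

lemma sol_geodesic_on_xz_arc:
  assumes "R > 0"
  shows "sol_geodesic_on I (xz_arc m R u0 a)"
proof -
  define acc :: "real \<Rightarrow> sol" where "acc s = (- 2 * R * a\<^sup>2 * sinh (u0 + a * s) / (cosh (u0 + a * s)) ^ 3, 0,
      a\<^sup>2 / (cosh (u0 + a * s))\<^sup>2)" for s
  have velocity_deriv: "(xz_arc_velocity R u0 a has_vector_derivative acc s) (at s within I)" for s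
  proof -
    have "cosh (u0 + a * s) \<noteq> 0" by simp
    moreover have sinh_sq: "sinh x * sinh x = cosh x * cosh x - 1" for x :: real
      using sinh_square_eq[of x] by (simp add: power2_eq_square)
    ultimately show ?thesis
      unfolding xz_arc_velocity_def acc_def
      by (intro has_vector_derivative_triple)
         (auto intro!: derivative_eq_intros simp: divide_simps power2_eq_square eval_nat_numeral algebra_simps sinh_sq)
  qed
  have "sol_geodesic_eq (xz_arc m R u0 a s) (xz_arc_velocity R u0 a s) (acc s)" for s
  proof -
    have c: "cosh (u0 + a * s) > 0" by simp
    have "exp (2 * (ln (cosh (u0 + a * s)) - ln R)) = (cosh (u0 + a * s) / R)\<^sup>2"
      using c assms by (simp add: right_diff_distrib exp_diff exp_double power_divide)
    then show ?thesis
      unfolding sol_geodesic_eq_def xz_arc_def xz_arc_velocity_def acc_def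
      using c assms by (simp add: field_simps eval_nat_numeral)
  qed
  then show ?thesis
    unfolding sol_geodesic_on_def
    using has_vector_derivative_xz_arc velocity_deriv by blast
qed

lemma xz_arc_at_arsinh:
  assumes "c > 0" and "R = c * sqrt (s\<^sup>2 + 1)" and "u0 + a * t = arsinh s"
  shows "xz_arc m R u0 a t = (m + c * s, 0, - ln c)"
    and "xz_arc_velocity R u0 a t = (a / sqrt (s\<^sup>2 + 1)) *\<^sub>R (c, 0, s)"
proof -
  have "sqrt (s\<^sup>2 + 1) > 0" by (simp add: add_nonneg_pos)
  then show "xz_arc m R u0 a t = (m + c * s, 0, - ln c)"
      and "xz_arc_velocity R u0 a t = (a / sqrt (s\<^sup>2 + 1)) *\<^sub>R (c, 0, s)"
    unfolding xz_arc_def xz_arc_velocity_def assms(2,3) cosh_arsinh_real sinh_arsinh_real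
    using assms(1) by (simp_all add: ln_mult power2_eq_square field_simps)
qed

lemma sol_xz_arc_segment:
  assumes "c0 > 0" "c1 > 0" "s0 < s1" and "c0 * sqrt (s0\<^sup>2 + 1) = c1 * sqrt (s1\<^sup>2 + 1)"
  obtains \<gamma> where "sol_geodesic_segment \<gamma> (m + c0 * s0, 0, - ln c0) (m + c1 * s1, 0, - ln c1)"
    and "\<exists>k>0. init_tangent \<gamma> = k *\<^sub>R (c0, 0, s0)"
    and "\<exists>k>0. end_tangent \<gamma> = k *\<^sub>R (- c1, 0, - s1)"
proof
  define R where "R = c0 * sqrt (s0\<^sup>2 + 1)"
  define a where "a = arsinh s1 - arsinh s0"
  define \<gamma> where "\<gamma> = xz_arc m R (arsinh s0) a"
  have "R > 0" using assms(1) by (simp add: R_def add_nonneg_pos)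
  have "a > 0" using \<open>s0 < s1\<close> by (simp add: a_def arsinh_real_strict_mono)
  note tangent = vector_derivative_unit_interval[OF has_vector_derivative_xz_arc]
  note start = xz_arc_at_arsinh[of c0 R s0 "arsinh s0" a 0]
  note finish = xz_arc_at_arsinh[of c1 R s1 "arsinh s0" a 1]
  have ends: "\<gamma> 0 = (m + c0 * s0, 0, - ln c0)" "\<gamma> 1 = (m + c1 * s1, 0, - ln c1)"
    using start finish assms by (simp_all add: \<gamma>_def R_def a_def)
  show "sol_geodesic_segment \<gamma> (m + c0 * s0, 0, - ln c0) (m + c1 * s1, 0, - ln c1)"
    using sol_geodesic_on_xz_arc[OF \<open>R > 0\<close>] ends by (simp add: sol_geodesic_segment_def \<gamma>_def)
  have "init_tangent \<gamma> = (a / sqrt (s0\<^sup>2 + 1)) *\<^sub>R (c0, 0, s0)"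
    using start assms by (simp add: init_tangent_def \<gamma>_def R_def tangent)
  then show "\<exists>k>0. init_tangent \<gamma> = k *\<^sub>R (c0, 0, s0)"
    using \<open>a > 0\<close> by (intro exI[of _ "a / sqrt (s0\<^sup>2 + 1)"]) (simp add: add_nonneg_pos)
  have "end_tangent \<gamma> = (a / sqrt (s1\<^sup>2 + 1)) *\<^sub>R (- c1, 0, - s1)"
    using finish assms by (simp add: end_tangent_def \<gamma>_def R_def a_def tangent)
  then show "\<exists>k>0. end_tangent \<gamma> = k *\<^sub>R (- c1, 0, - s1)"
    using \<open>a > 0\<close> by (intro exI[of _ "a / sqrt (s1\<^sup>2 + 1)"]) (simp add: add_nonneg_pos)
qed

lemma sol_yz_arc_segment:
  assumes "c0 > 0" "c1 > 0" "s0 < s1" "c0 * sqrt (s0\<^sup>2 + 1) = c1 * sqrt (s1\<^sup>2 + 1)"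
  obtains \<gamma> where "sol_geodesic_segment \<gamma> (0, m + c1 * s1, ln c1) (0, m + c0 * s0, ln c0)"
    and "\<exists>k>0. init_tangent \<gamma> = k *\<^sub>R (0, - c1, s1)"
    and "\<exists>k>0. end_tangent \<gamma> = k *\<^sub>R (0, c0, - s0)"
proof -
  obtain \<gamma> where seg: "sol_geodesic_segment \<gamma> (m + c0 * s0, 0, - ln c0) (m + c1 * s1, 0, - ln c1)"
    and init: "\<exists>k>0. init_tangent \<gamma> = k *\<^sub>R (c0, 0, s0)"
    and final: "\<exists>k>0. end_tangent \<gamma> = k *\<^sub>R (- c1, 0, - s1)"
    using sol_xz_arc_segment[OF assms] .
  note swapped = sol_geodesic_segment_swap[OF seg]
  note reversed = sol_geodesic_segment_reverse[OF swapped(1)]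
  show ?thesis
  proof
    show "sol_geodesic_segment (\<lambda>t. (sol_swap \<circ> \<gamma>) (1 - t)) (0, m + c1 * s1, ln c1) (0, m + c0 * s0, ln c0)"
      using reversed(1) by (simp add: sol_swap_def)
    show "\<exists>k>0. init_tangent (\<lambda>t. (sol_swap \<circ> \<gamma>) (1 - t)) = k *\<^sub>R (0, - c1, s1)"
      using final unfolding reversed(2) swapped(3) by (auto simp: sol_swap_def)
    show "\<exists>k>0. end_tangent (\<lambda>t. (sol_swap \<circ> \<gamma>) (1 - t)) = k *\<^sub>R (0, c0, - s0)"
      using init unfolding reversed(3) swapped(2) by (auto simp: sol_swap_def)
  qed
qed

lemma sol_horizontal_segment:
  assumes "exp (2 * z) * p\<^sup>2 = exp (- 2 * z) * r\<^sup>2"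
  shows "sol_geodesic_segment (\<lambda>t. (p - p * t, r * t, z)) (p, 0, z) (0, r, z)"
    and "init_tangent (\<lambda>t. (p - p * t, r * t, z)) = (- p, r, 0)"
    and "end_tangent (\<lambda>t. (p - p * t, r * t, z)) = (p, - r, 0)"
proof -
  have deriv: "((\<lambda>t. (p - p * t, r * t, z)) has_vector_derivative (- p, r, 0)) (at t within S)" for t S
    by (intro has_vector_derivative_triple) (auto intro!: derivative_eq_intros)
  have "sol_geodesic_on {0..1} (\<lambda>t. (p - p * t, r * t, z))"
    unfolding sol_geodesic_on_def
    using deriv assms by (intro exI[of _ "\<lambda>_. (- p, r, 0)"] exI[of _ "\<lambda>_. 0"])
      (simp add: sol_geodesic_eq_def)
  then show "sol_geodesic_segment (\<lambda>t. (p - p * t, r * t, z)) (p, 0, z) (0, r, z)"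
    by (simp add: sol_geodesic_segment_def)
  show "init_tangent (\<lambda>t. (p - p * t, r * t, z)) = (- p, r, 0)"
    and "end_tangent (\<lambda>t. (p - p * t, r * t, z)) = (p, - r, 0)"
    by (simp_all add: init_tangent_def end_tangent_def vector_derivative_unit_interval[OF deriv])
qed

lemma sol_geodesic_x_momentum_const:
  assumes "\<And>t. (\<gamma> has_vector_derivative \<gamma>' t) (at t)"
    and "\<And>t. (\<gamma>' has_vector_derivative \<gamma>'' t) (at t)"
    and "\<And>t. sol_geodesic_eq (\<gamma> t) (\<gamma>' t) (\<gamma>'' t)"
  shows "exp (2 * snd (snd (\<gamma> s))) * fst (\<gamma>' s) = exp (2 * snd (snd (\<gamma> t))) * fst (\<gamma>' t)"
proof -
  have "((\<lambda>t. exp (2 * snd (snd (\<gamma> t))) * fst (\<gamma>' t)) has_real_derivative 0) (at t)" for t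
  proof -
    have z: "((\<lambda>t. snd (snd (\<gamma> t))) has_real_derivative snd (snd (\<gamma>' t))) (at t)"
      using bounded_linear.has_vector_derivative[OF bounded_linear_snd
          bounded_linear.has_vector_derivative[OF bounded_linear_snd assms(1)]]
      by (simp add: has_real_derivative_iff_has_vector_derivative)
    have x': "((\<lambda>t. fst (\<gamma>' t)) has_real_derivative fst (\<gamma>'' t)) (at t)"
      using bounded_linear.has_vector_derivative[OF bounded_linear_fst assms(2)]
      by (simp add: has_real_derivative_iff_has_vector_derivative)
    have "fst (\<gamma>'' t) = - 2 * fst (\<gamma>' t) * snd (snd (\<gamma>' t))"
      using assms(3)[of t] by (simp add: sol_geodesic_eq_def)
    then show ?thesis
      by (auto intro!: derivative_eq_intros z x')
  qed
  then show ?thesis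
    by (rule DERIV_isconst_all[where f = "\<lambda>t. exp (2 * snd (snd (\<gamma> t))) * fst (\<gamma>' t)", rule_format])
qed

lemma sol_geodesic_fst_const:
  assumes "sol_geodesic_on UNIV \<gamma>" and "fst (\<gamma> s) = fst (\<gamma> t)" and "s \<noteq> t"
  shows "fst (\<gamma> u) = fst (\<gamma> s)"
proof -
  obtain \<gamma>' \<gamma>'' where d: "\<And>t. (\<gamma> has_vector_derivative \<gamma>' t) (at t)"
    and d2: "\<And>t. (\<gamma>' has_vector_derivative \<gamma>'' t) (at t)"
    and eq: "\<And>t. sol_geodesic_eq (\<gamma> t) (\<gamma>' t) (\<gamma>'' t)"
    using assms(1) unfolding sol_geodesic_on_def by auto
  have x: "((\<lambda>t. fst (\<gamma> t)) has_real_derivative fst (\<gamma>' t)) (at t)" for t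
    using bounded_linear.has_vector_derivative[OF bounded_linear_fst d]
    by (simp add: has_real_derivative_iff_has_vector_derivative)
  have critical: "\<exists>w. fst (\<gamma>' w) = 0" if ab: "a < b" "fst (\<gamma> a) = fst (\<gamma> b)" for a b
  proof -
    have "continuous_on {a..b} (\<lambda>t. fst (\<gamma> t))"
      using x by (meson DERIV_continuous continuous_at_imp_continuous_on)
    then obtain w where "((\<lambda>t. fst (\<gamma> t)) has_real_derivative 0) (at w)"
      using Rolle[OF ab] x real_differentiable_def by blast
    then show ?thesis
      using x DERIV_unique by blast
  qed
  have "\<exists>w. fst (\<gamma>' w) = 0"
    using assms(2,3) critical[of s t] critical[of t s] by (cases "s < t") auto
  then obtain w where "fst (\<gamma>' w) = 0" ..
  then have "fst (\<gamma>' v) = 0" for v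
    using sol_geodesic_x_momentum_const[OF d d2 eq, of v w] by simp
  then show ?thesis
    using x DERIV_isconst_all by fastforce
qed

lemma not_sol_on_common_geodesic:
  assumes "fst A = 0" "fst C = 0" "A \<noteq> C" "fst B \<noteq> 0"
  shows "\<not> sol_on_common_geodesic A B C"
proof
  assume "sol_on_common_geodesic A B C"
  then obtain \<gamma> tA tB tC where "sol_geodesic_on UNIV \<gamma>" "A = \<gamma> tA" "B = \<gamma> tB" "C = \<gamma> tC"
    unfolding sol_on_common_geodesic_def by blast
  with assms sol_geodesic_fst_const[of \<gamma> tA tC tB] show False
    by (cases "tA = tC") auto
qed

section \<open>Angles\<close>

lemma sol_inner_scaleR_left: "sol_inner p (k *\<^sub>R v) w = k * sol_inner p v w"
  and sol_inner_scaleR_right: "sol_inner p v (k *\<^sub>R w) = k * sol_inner p v w"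
  unfolding sol_inner_def by (simp_all add: algebra_simps)

lemma sol_norm_scaleR: "k > 0 \<Longrightarrow> sol_norm p (k *\<^sub>R v) = k * sol_norm p v"
  unfolding sol_norm_def
  by (simp add: sol_inner_scaleR_left sol_inner_scaleR_right real_sqrt_mult power2_eq_square[symmetric])

lemma sol_angle_scaleR_left: "k > 0 \<Longrightarrow> sol_angle p (k *\<^sub>R v) w = sol_angle p v w"
  and sol_angle_scaleR_right: "k > 0 \<Longrightarrow> sol_angle p v (k *\<^sub>R w) = sol_angle p v w"
  unfolding sol_angle_def by (simp_all add: sol_inner_scaleR_left sol_inner_scaleR_right sol_norm_scaleR)

lemma arccos_add_arccos_eq_pi:
  assumes "0 \<le> b" "b \<le> 1" "0 \<le> c" "c \<le> 1" "a = sqrt (1 - b\<^sup>2) * sqrt (1 - c\<^sup>2) - b * c"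
  shows "arccos a + arccos b + arccos c = pi"
proof -
  define \<beta> where "\<beta> = arccos b"
  define \<gamma> where "\<gamma> = arccos c"
  have "0 \<le> \<beta>" "\<beta> \<le> pi/2" "0 \<le> \<gamma>" "\<gamma> \<le> pi/2"
    unfolding \<beta>_def \<gamma>_def using assms arccos_lbound arccos_le_pi2 by auto
  moreover have "cos (pi - (\<beta> + \<gamma>)) = a"
    using assms by (simp add: \<beta>_def \<gamma>_def cos_add sin_arccos)
  ultimately have "arccos a = pi - (\<beta> + \<gamma>)"
    using arccos_cos[of "pi - (\<beta> + \<gamma>)"] by simp
  then show ?thesis unfolding \<beta>_def \<gamma>_def by simp
qed

lemma exp_two_ln_4: "exp (2 * ln 4) = (16::real)" "exp (- (2 * ln 4)) = (1/16::real)"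
  by (simp_all add: exp_minus exp_double)

lemma sol_angle_at_origin:
  "sol_angle (0, 0, 0) (1, 0, - m) (0, 1, n) = arccos (- (m * n) / (sqrt (1 + m\<^sup>2) * sqrt (1 + n\<^sup>2)))"
  by (simp add: sol_angle_def sol_norm_def sol_inner_def power2_eq_square)

lemma sol_angle_at_B:
  assumes "p > 0"
  shows "sol_angle (p, 0, - ln 4) (- p, p / 16, 0) (- 4, 0, - ((p - m) / 4))
    = arccos (sqrt 8 / sqrt (16 + (p - m)\<^sup>2))"
proof -
  have norm_BC: "sol_norm (p, 0, - ln 4) (- p, p / 16, 0) = p / sqrt 8"
    using assms by (simp add: sol_norm_def sol_inner_def exp_two_ln_4 real_sqrt_divide power2_eq_square)
  have norm_BA: "sol_norm (p, 0, - ln 4) (- 4, 0, - ((p - m) / 4)) = sqrt (16 + (p - m)\<^sup>2) / 4"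
    by (simp add: sol_norm_def sol_inner_def exp_two_ln_4 real_sqrt_divide power2_eq_square field_simps)
  have inner: "sol_inner (p, 0, - ln 4) (- p, p / 16, 0) (- 4, 0, - ((p - m) / 4)) = p / 4"
    by (simp add: sol_inner_def exp_two_ln_4)
  show ?thesis
    unfolding sol_angle_def inner norm_BC norm_BA using assms by (simp add: field_simps add_pos_nonneg)
qed

lemma sol_angle_at_C:
  assumes "p > 0"
  shows "sol_angle (0, p / 16, - ln 4) (0, - (1/4), p / 4 - 4 * n) (p, - (p / 16), 0)
    = arccos (sqrt 8 / sqrt (16 + (p - 16 * n)\<^sup>2))"
proof -
  have inner: "sol_inner (0, p / 16, - ln 4) (0, - (1/4), p / 4 - 4 * n) (p, - (p / 16), 0) = p / 4"
    by (simp add: sol_inner_def exp_two_ln_4)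
  have norm_CA: "sol_norm (0, p / 16, - ln 4) (0, - (1/4), p / 4 - 4 * n) = sqrt (16 + (p - 16 * n)\<^sup>2) / 4"
    by (simp add: sol_norm_def sol_inner_def exp_two_ln_4 real_sqrt_divide power2_eq_square field_simps)
  have norm_CB: "sol_norm (0, p / 16, - ln 4) (p, - (p / 16), 0) = p / sqrt 8"
    using assms by (simp add: sol_norm_def sol_inner_def exp_two_ln_4 real_sqrt_divide power2_eq_square)
  show ?thesis
    unfolding sol_angle_def inner norm_CA norm_CB using assms by (simp add: field_simps add_pos_nonneg)
qed

section \<open>The triangle\<close>

text \<open>
  Centres of the half-plane semicircles through the sides: AB lies on the circle about x = centre_AB p
  in the plane y = 0, CA on the circle about y = centre_CA p in the plane x = 0.
\<close>

definition centre_AB :: "real \<Rightarrow> real" where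
  "centre_AB p = (p\<^sup>2 + 15) / (2 * p)"

definition centre_CA :: "real \<Rightarrow> real" where
  "centre_CA p = (p\<^sup>2 - 240) / (32 * p)"

lemma side_AB:
  assumes "p > 0"
  obtains \<gamma> where "sol_geodesic_segment \<gamma> (0, 0, 0) (p, 0, - ln 4)"
    and "\<exists>k>0. init_tangent \<gamma> = k *\<^sub>R (1, 0, - centre_AB p)"
    and "\<exists>k>0. end_tangent \<gamma> = k *\<^sub>R (- 4, 0, - ((p - centre_AB p) / 4))"
proof -
  define m where "m = centre_AB p"
  have "m > 0" "2 * p * m = p\<^sup>2 + 15"
    using assms by (simp_all add: m_def centre_AB_def add_pos_nonneg)
  have lt: "- m < (p - m) / 4"
    using assms \<open>m > 0\<close> by simp
  have radius: "1 * sqrt ((- m)\<^sup>2 + 1) = 4 * sqrt (((p - m) / 4)\<^sup>2 + 1)"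
  proof -
    have "(- m)\<^sup>2 + 1 = 4\<^sup>2 * (((p - m) / 4)\<^sup>2 + 1)"
      using \<open>2 * p * m = p\<^sup>2 + 15\<close> by (simp add: power2_eq_square field_simps)
    then show ?thesis by (simp only: real_sqrt_mult real_sqrt_abs)
  qed
  obtain \<gamma> where "sol_geodesic_segment \<gamma> (m + 1 * - m, 0, - ln 1) (m + 4 * ((p - m) / 4), 0, - ln 4)"
      and "\<exists>k>0. init_tangent \<gamma> = k *\<^sub>R (1, 0, - m)"
      and "\<exists>k>0. end_tangent \<gamma> = k *\<^sub>R (- 4, 0, - ((p - m) / 4))"
    using sol_xz_arc_segment[where m = m, OF zero_less_one _ lt radius] by force
  moreover have "(m + 1 * - m, 0, - ln 1) = (0, 0, 0::real)"
    and "(m + 4 * ((p - m) / 4), 0, - ln 4) = (p, 0, - ln 4)"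
    by (simp_all add: field_simps)
  ultimately show ?thesis
    using that unfolding m_def by metis
qed

lemma side_CA:
  assumes "p > 0"
  obtains \<gamma> where "sol_geodesic_segment \<gamma> (0, p / 16, - ln 4) (0, 0, 0)"
    and "\<exists>k>0. init_tangent \<gamma> = k *\<^sub>R (0, - (1/4), p / 4 - 4 * centre_CA p)"
    and "\<exists>k>0. end_tangent \<gamma> = k *\<^sub>R (0, 1, centre_CA p)"
proof -
  define n where "n = centre_CA p"
  have "32 * p * n = p\<^sup>2 - 240"
    using assms by (simp add: n_def centre_CA_def)
  have lt: "- n < p / 4 - 4 * n"
  proof -
    have "96 * p * n < 8 * p\<^sup>2"
      using \<open>32 * p * n = p\<^sup>2 - 240\<close> zero_le_power2[of p] by linarith
    then show ?thesis
      using assms by (simp add: field_simps power2_eq_square)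
  qed
  have radius: "1 * sqrt ((- n)\<^sup>2 + 1) = 1/4 * sqrt ((p / 4 - 4 * n)\<^sup>2 + 1)"
  proof -
    have "(p / 4 - 4 * n)\<^sup>2 + 1 = 4\<^sup>2 * ((- n)\<^sup>2 + 1)"
      using \<open>32 * p * n = p\<^sup>2 - 240\<close> by (simp add: power2_eq_square field_simps)
    then have "sqrt ((p / 4 - 4 * n)\<^sup>2 + 1) = 4 * sqrt ((- n)\<^sup>2 + 1)"
      by (simp only: real_sqrt_mult real_sqrt_abs)
    then show ?thesis by simp
  qed
  obtain \<gamma> where "sol_geodesic_segment \<gamma> (0, n + 1/4 * (p / 4 - 4 * n), ln (1/4)) (0, n + 1 * - n, ln 1)"
      and "\<exists>k>0. init_tangent \<gamma> = k *\<^sub>R (0, - (1/4), p / 4 - 4 * n)"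
      and "\<exists>k>0. end_tangent \<gamma> = k *\<^sub>R (0, 1, - (- n))"
    using sol_yz_arc_segment[where m = n, OF zero_less_one _ lt radius] by force
  moreover have "(0, n + 1/4 * (p / 4 - 4 * n), ln (1/4)) = (0, p / 16, - ln (4::real))"
    and "(0, n + 1 * - n, ln 1) = (0, 0, 0::real)" and "- (- n) = n"
    by (simp_all add: ln_div field_simps)
  ultimately show ?thesis
    using that unfolding n_def by metis
qed

definition cos_angle_A :: "real \<Rightarrow> real" where
  "cos_angle_A p = - (centre_AB p * centre_CA p)
     / (sqrt (1 + (centre_AB p)\<^sup>2) * sqrt (1 + (centre_CA p)\<^sup>2))"

definition cos_angle_B :: "real \<Rightarrow> real" where
  "cos_angle_B p = sqrt 8 / sqrt (16 + (p - centre_AB p)\<^sup>2)"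

definition cos_angle_C :: "real \<Rightarrow> real" where
  "cos_angle_C p = sqrt 8 / sqrt (16 + (p - 16 * centre_CA p)\<^sup>2)"

lemma sol_triangle_angles:
  assumes "p > 0"
  obtains \<gamma>AB \<gamma>BC \<gamma>CA where
    "sol_geodesic_segment \<gamma>AB (0, 0, 0) (p, 0, - ln 4)"
    "sol_geodesic_segment \<gamma>BC (p, 0, - ln 4) (0, p / 16, - ln 4)"
    "sol_geodesic_segment \<gamma>CA (0, p / 16, - ln 4) (0, 0, 0)"
    "sol_angle (0, 0, 0) (init_tangent \<gamma>AB) (end_tangent \<gamma>CA) = arccos (cos_angle_A p)"
    "sol_angle (p, 0, - ln 4) (init_tangent \<gamma>BC) (end_tangent \<gamma>AB) = arccos (cos_angle_B p)"
    "sol_angle (0, p / 16, - ln 4) (init_tangent \<gamma>CA) (end_tangent \<gamma>BC) = arccos (cos_angle_C p)"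
proof -
  obtain \<gamma>AB k1 k2 where AB: "sol_geodesic_segment \<gamma>AB (0, 0, 0) (p, 0, - ln 4)"
    and "k1 > 0" "init_tangent \<gamma>AB = k1 *\<^sub>R (1, 0, - centre_AB p)"
    and "k2 > 0" "end_tangent \<gamma>AB = k2 *\<^sub>R (- 4, 0, - ((p - centre_AB p) / 4))"
    using side_AB[OF assms] by metis
  obtain \<gamma>CA k3 k4 where CA: "sol_geodesic_segment \<gamma>CA (0, p / 16, - ln 4) (0, 0, 0)"
    and "k3 > 0" "init_tangent \<gamma>CA = k3 *\<^sub>R (0, - (1/4), p / 4 - 4 * centre_CA p)"
    and "k4 > 0" "end_tangent \<gamma>CA = k4 *\<^sub>R (0, 1, centre_CA p)"
    using side_CA[OF assms] by metis
  have "exp (2 * - ln 4) * p\<^sup>2 = exp (- 2 * - ln 4) * (p / 16)\<^sup>2"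
    by (simp add: exp_two_ln_4 power2_eq_square)
  note BC = sol_horizontal_segment[OF this]
  show ?thesis
  proof (rule that[OF AB BC(1) CA])
    show "sol_angle (0, 0, 0) (init_tangent \<gamma>AB) (end_tangent \<gamma>CA) = arccos (cos_angle_A p)"
      unfolding \<open>init_tangent \<gamma>AB = _\<close> \<open>end_tangent \<gamma>CA = _\<close>
        sol_angle_scaleR_left[OF \<open>k1 > 0\<close>] sol_angle_scaleR_right[OF \<open>k4 > 0\<close>]
        sol_angle_at_origin cos_angle_A_def ..
    show "sol_angle (p, 0, - ln 4) (init_tangent (\<lambda>t. (p - p * t, p / 16 * t, - ln 4))) (end_tangent \<gamma>AB)
        = arccos (cos_angle_B p)"
      unfolding \<open>end_tangent \<gamma>AB = _\<close> BC(2) sol_angle_scaleR_right[OF \<open>k2 > 0\<close>]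
        sol_angle_at_B[OF assms] cos_angle_B_def ..
    show "sol_angle (0, p / 16, - ln 4) (init_tangent \<gamma>CA) (end_tangent (\<lambda>t. (p - p * t, p / 16 * t, - ln 4)))
        = arccos (cos_angle_C p)"
      unfolding \<open>init_tangent \<gamma>CA = _\<close> BC(3) sol_angle_scaleR_left[OF \<open>k3 > 0\<close>]
        sol_angle_at_C[OF assms] cos_angle_C_def ..
  qed
qed

definition cos_defect :: "real \<Rightarrow> real" where
  "cos_defect p = cos_angle_A p + cos_angle_B p * cos_angle_C p
     - sqrt (1 - (cos_angle_B p)\<^sup>2) * sqrt (1 - (cos_angle_C p)\<^sup>2)"

lemma sqrt_8_div_bounds:
  fixes x :: real
  shows "0 \<le> sqrt 8 / sqrt (16 + x\<^sup>2)" and "sqrt 8 / sqrt (16 + x\<^sup>2) \<le> 1"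
    and "(sqrt 8 / sqrt (16 + x\<^sup>2))\<^sup>2 = 8 / (16 + x\<^sup>2)"
proof -
  show "0 \<le> sqrt 8 / sqrt (16 + x\<^sup>2)" by simp
  show square: "(sqrt 8 / sqrt (16 + x\<^sup>2))\<^sup>2 = 8 / (16 + x\<^sup>2)"
    by (simp add: power_divide add_nonneg_nonneg)
  have "8 / (16 + x\<^sup>2) \<le> 1\<^sup>2"
    by (simp add: divide_le_eq add_nonneg_nonneg)
  then show "sqrt 8 / sqrt (16 + x\<^sup>2) \<le> 1"
    unfolding square[symmetric] by (rule power2_le_imp_le) simp
qed

lemma cos_angle_B_C_bounds:
  "0 \<le> cos_angle_B p" "cos_angle_B p \<le> 1" "0 \<le> cos_angle_C p" "cos_angle_C p \<le> 1"
  unfolding cos_angle_B_def cos_angle_C_def by (rule sqrt_8_div_bounds)+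

lemma continuous_on_cos_defect: "continuous_on {5..15} cos_defect"
proof -
  have pos: "16 + x\<^sup>2 \<noteq> 0" "1 + x\<^sup>2 \<noteq> 0" for x :: real
    by (simp_all add: add_pos_nonneg less_imp_neq[symmetric])
  have "continuous_on {5..15} centre_AB" "continuous_on {5..15} centre_CA"
    unfolding centre_AB_def centre_CA_def by (intro continuous_intros; simp)+
  then show ?thesis
    unfolding cos_defect_def cos_angle_A_def cos_angle_B_def cos_angle_C_def
    by (intro continuous_intros) (simp_all add: pos)
qed

lemma cos_defect_5_nonneg: "cos_defect 5 \<ge> 0"
proof -
  have centres: "centre_AB 5 = 4" "centre_CA 5 = -43/32"
    by (simp_all add: centre_AB_def centre_CA_def power2_eq_square)
  have "sqrt (1 + (centre_AB 5)\<^sup>2) * sqrt (1 + (centre_CA 5)\<^sup>2) = sqrt ((221/32)\<^sup>2)"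
    unfolding centres real_sqrt_mult[symmetric] by (simp add: power2_eq_square)
  then have denominator: "sqrt (1 + (centre_AB 5)\<^sup>2) * sqrt (1 + (centre_CA 5)\<^sup>2) = 221/32"
    by simp
  have A: "cos_angle_A 5 = 172/221"
    unfolding cos_angle_A_def denominator by (simp add: centres)
  have "(cos_angle_B 5)\<^sup>2 = 8/17"
    unfolding cos_angle_B_def sqrt_8_div_bounds(3) centres by (simp add: power2_eq_square)
  then have sin_B: "sqrt (1 - (cos_angle_B 5)\<^sup>2) \<le> 3/4"
    by (intro real_le_lsqrt) (simp_all add: power2_eq_square)
  have sin_C: "0 \<le> sqrt (1 - (cos_angle_C 5)\<^sup>2)" "sqrt (1 - (cos_angle_C 5)\<^sup>2) \<le> 1"
    using cos_angle_B_C_bounds(3,4)[of 5] by (simp_all add: power_le_one)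
  have "sqrt (1 - (cos_angle_B 5)\<^sup>2) * sqrt (1 - (cos_angle_C 5)\<^sup>2) \<le> 3/4"
    using mult_mono[OF sin_B sin_C(2)] sin_C(1) by simp
  moreover have "0 \<le> cos_angle_B 5 * cos_angle_C 5"
    using cos_angle_B_C_bounds(1,3) by simp
  ultimately show ?thesis
    unfolding cos_defect_def A by simp
qed

lemma cos_defect_15_nonpos: "cos_defect 15 \<le> 0"
proof -
  have centres: "centre_AB 15 = 8" "centre_CA 15 = -1/32"
    by (simp_all add: centre_AB_def centre_CA_def power2_eq_square)
  have "1 * 1 \<le> sqrt (1 + (centre_AB 15)\<^sup>2) * sqrt (1 + (centre_CA 15)\<^sup>2)"
    by (intro mult_mono) simp_all
  then have A: "cos_angle_A 15 \<le> 1/4"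
    unfolding cos_angle_A_def by (simp add: centres divide_le_eq)
  have B2: "(cos_angle_B 15)\<^sup>2 \<le> (1/2)\<^sup>2" and C2: "(cos_angle_C 15)\<^sup>2 \<le> (1/2)\<^sup>2"
    unfolding cos_angle_B_def cos_angle_C_def sqrt_8_div_bounds(3) centres
    by (simp_all add: power2_eq_square)
  have "cos_angle_B 15 \<le> 1/2" "cos_angle_C 15 \<le> 1/2"
    by (rule power2_le_imp_le[OF B2], simp) (rule power2_le_imp_le[OF C2], simp)
  then have "cos_angle_B 15 * cos_angle_C 15 \<le> 1/2 * (1/2)"
    using cos_angle_B_C_bounds by (intro mult_mono) simp_all
  moreover have "3/4 * (3/4) \<le> (1 - (cos_angle_B 15)\<^sup>2) * (1 - (cos_angle_C 15)\<^sup>2)"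
    using B2 C2 by (intro mult_mono) (simp_all add: power2_eq_square)
  then have "3/4 \<le> sqrt (1 - (cos_angle_B 15)\<^sup>2) * sqrt (1 - (cos_angle_C 15)\<^sup>2)"
    unfolding real_sqrt_mult[symmetric] by (intro real_le_rsqrt) (simp add: power2_eq_square)
  ultimately show ?thesis
    unfolding cos_defect_def using A by simp
qed

theorem lemma3p4:
  shows "\<exists>A B C \<gamma>AB \<gamma>BC \<gamma>CA.
     A \<noteq> B \<and> B \<noteq> C \<and> A \<noteq> C \<and>
     \<not> sol_on_common_geodesic A B C \<and>
     sol_geodesic_segment \<gamma>AB A B \<and>
     sol_geodesic_segment \<gamma>BC B C \<and>
     sol_geodesic_segment \<gamma>CA C A \<and>
     sol_angle A (init_tangent \<gamma>AB) (end_tangent \<gamma>CA)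
   + sol_angle B (init_tangent \<gamma>BC) (end_tangent \<gamma>AB)
   + sol_angle C (init_tangent \<gamma>CA) (end_tangent \<gamma>BC) = pi"
proof -
  obtain p where "5 \<le> p" "p \<le> 15" and defect: "cos_defect p = 0"
    using IVT2'[of cos_defect 15 0 5] cos_defect_5_nonneg cos_defect_15_nonpos continuous_on_cos_defect
    by auto
  then have "p > 0" by simp
  obtain \<gamma>AB \<gamma>BC \<gamma>CA where sides:
      "sol_geodesic_segment \<gamma>AB (0, 0, 0) (p, 0, - ln 4)"
      "sol_geodesic_segment \<gamma>BC (p, 0, - ln 4) (0, p / 16, - ln 4)"
      "sol_geodesic_segment \<gamma>CA (0, p / 16, - ln 4) (0, 0, 0)"
    and angles:
      "sol_angle (0, 0, 0) (init_tangent \<gamma>AB) (end_tangent \<gamma>CA) = arccos (cos_angle_A p)"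
      "sol_angle (p, 0, - ln 4) (init_tangent \<gamma>BC) (end_tangent \<gamma>AB) = arccos (cos_angle_B p)"
      "sol_angle (0, p / 16, - ln 4) (init_tangent \<gamma>CA) (end_tangent \<gamma>BC) = arccos (cos_angle_C p)"
    using sol_triangle_angles[OF \<open>p > 0\<close>] by metis
  have "arccos (cos_angle_A p) + arccos (cos_angle_B p) + arccos (cos_angle_C p) = pi"
    using defect cos_angle_B_C_bounds by (intro arccos_add_arccos_eq_pi) (auto simp: cos_defect_def)
  moreover have "\<not> sol_on_common_geodesic (0, 0, 0) (p, 0, - ln 4) (0, p / 16, - ln 4)"
    using \<open>p > 0\<close> by (intro not_sol_on_common_geodesic) auto
  ultimately show ?thesis
    using sides angles \<open>p > 0\<close>
    by (intro exI[of _ "(0, 0, 0)"] exI[of _ "(p, 0, - ln 4)"] exI[of _ "(0, p / 16, - ln 4)"]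
        exI[of _ \<gamma>AB] exI[of _ \<gamma>BC] exI[of _ \<gamma>CA]) simp
qed

end
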